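(* Let $p\in[1,\infty]$, let $(X,d,\mu)$ be a metric measure space which is $p$-thick quasiconvex with some constant $C\ge1$, and let $d_p$ be the associated metric on $X$. Let $(Y,d_Y,\mu_Y)$ be a $p$-thick geodesic metric measure space and $f:Y\to X$ a volume preserving $1$-Lipschitz map. Then $f:Y\to(X,d_p)$ is volume preserving and $1$-Lipschitz.
   Context: A metric measure space is a proper metric space with a Borel regular outer measure positive and finite on balls. $\operatorname{Mod}_p\Gamma=\inf\int\rho^pd\mu$ (for $p<\infty$), $\operatorname{Mod}_\infty\Gamma=\inf\|\rho\|_{L^\infty}$, over Borel $\rho\ge0$ with $\int_\gamma\rho\ge1$ on $\Gamma$. $\Gamma(E,F;C)$ is the family of curves $\gamma:[0,1]\to X$ with $\gamma(0)\in E,\gamma(1)\in F,\ell(\gamma)\le Cd(\gamma(0),\gamma(1))$. $X$ is $p$-thick quasiconvex with constant $C$ if $\operatorname{Mod}_p\Gamma(E,F;C)>0$ for all measurable $E,F$ of positive measure, and $p$-thick geodesic if this holds for every $C>1$. Volume preserving means $f_*\mu_Y=\mu$. The metric $d_p$: with $\overline\Gamma(X)$ the Lipschitz curves $[0,1]\to X$ and $\Gamma(E,F)$ those from $E$ to $F$, set $ess\ell_p(\Gamma):=\sup_{\operatorname{Mod}_p\Gamma_0=0}\inf\{\ell(\gamma):\gamma\in\Gamma\setminus\Gamma_0\}$ ($\inf\emptyset=\infty$), $d_p'(x,y):=\lim_{\delta\to0}ess\ell_p\Gamma(\bar B(x,\delta),\bar B(y,\delta))$ and $d_p(x,y):=\inf\{\sum_{i=1}^nd_p'(x_{i-1},x_i):x_0=x,x_n=y\}$.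 *)

theory Defs
  imports "HOL-Analysis.Analysis" "HOL-Probability.Essential_Supremum"
begin

text \<open>A metric measure space: the metric is the one of the type class, mu is the measure
  given by a Borel regular outer measure restricted to its (Caratheodory) measurable sets,
  i.e. a complete measure containing the Borel sets, Borel regular; X proper; mu positive and
  finite on (open, nondegenerate) balls.\<close>

definition mms :: "('a::metric_space) measure \<Rightarrow> bool" where
  "mms M \<longleftrightarrow>
     space M = UNIV \<and>
     sets (borel :: 'a measure) \<subseteq> sets M \<and>
     (\<forall>A\<in>sets M. emeasure M A = 0 \<longrightarrow> (\<forall>B. B \<subseteq> A \<longrightarrow> B \<in> sets M)) \<and>
     (\<forall>A\<in>sets M. \<exists>B\<in>sets (borel :: 'a measure). A \<subseteq> B \<and> emeasure M B = emeasure M A) \<and>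
     (\<forall>(x::'a) r. compact (cball x r)) \<and>
     (\<forall>x r. r > 0 \<longrightarrow> 0 < emeasure M (ball x r) \<and> emeasure M (ball x r) < \<infinity>)"

text \<open>Curves are maps gamma :: real => 'a, considered on [0,1].\<close>

definition curve_length :: "(real \<Rightarrow> 'a::metric_space) \<Rightarrow> real \<Rightarrow> real \<Rightarrow> ennreal" where
  "curve_length \<gamma> a b =
     (SUP (n, t) \<in> {(n::nat, t::nat \<Rightarrow> real). t 0 = a \<and> t n = b \<and> (\<forall>i<n. t i \<le> t (Suc i))}.
        (\<Sum>i<n. ennreal (dist (\<gamma> (t i)) (\<gamma> (t (Suc i))))))"

definition len :: "(real \<Rightarrow> 'a::metric_space) \<Rightarrow> ennreal" where
  "len \<gamma> = curve_length \<gamma> 0 1"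

definition arclength_param :: "(real \<Rightarrow> 'a::metric_space) \<Rightarrow> real \<Rightarrow> 'a" where
  "arclength_param \<gamma> s = \<gamma> (SOME t. t \<in> {0..1} \<and> curve_length \<gamma> 0 t = ennreal s)"

definition line_integral :: "('a::metric_space \<Rightarrow> ennreal) \<Rightarrow> (real \<Rightarrow> 'a) \<Rightarrow> ennreal" where
  "line_integral \<rho> \<gamma> =
     (\<integral>\<^sup>+ s \<in> {0..enn2real (len \<gamma>)}. \<rho> (arclength_param \<gamma> s) \<partial>lborel)"

definition enn_powr :: "ennreal \<Rightarrow> real \<Rightarrow> ennreal" where
  "enn_powr x q = (if x = \<infinity> then \<infinity> else ennreal (enn2real x powr q))"

definition admissible :: "(real \<Rightarrow> 'a::metric_space) set \<Rightarrow> ('a \<Rightarrow> ennreal) \<Rightarrow> bool" where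
  "admissible \<Gamma> \<rho> \<longleftrightarrow> \<rho> \<in> borel_measurable (borel :: 'a measure) \<and> (\<forall>\<gamma>\<in>\<Gamma>. line_integral \<rho> \<gamma> \<ge> 1)"

text \<open>p-modulus, p in [1, infinity] represented as an extended nonnegative real.\<close>
definition Mod :: "'a::metric_space measure \<Rightarrow> ennreal \<Rightarrow> (real \<Rightarrow> 'a) set \<Rightarrow> ennreal" where
  "Mod M p \<Gamma> =
     (if p = \<infinity> then (INF \<rho> \<in> {\<rho>. admissible \<Gamma> \<rho>}. esssup M \<rho>)
      else (INF \<rho> \<in> {\<rho>. admissible \<Gamma> \<rho>}. \<integral>\<^sup>+ x. enn_powr (\<rho> x) (enn2real p) \<partial>M))"

definition curves_qc :: "'a::metric_space set \<Rightarrow> 'a set \<Rightarrow> real \<Rightarrow> (real \<Rightarrow> 'a) set" where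
  "curves_qc E F C = {\<gamma>. continuous_on {0..1} \<gamma> \<and> \<gamma> 0 \<in> E \<and> \<gamma> 1 \<in> F \<and>
                          len \<gamma> \<le> ennreal (C * dist (\<gamma> 0) (\<gamma> 1))}"

definition thick_quasiconvex :: "'a::metric_space measure \<Rightarrow> ennreal \<Rightarrow> real \<Rightarrow> bool" where
  "thick_quasiconvex M p C \<longleftrightarrow>
     (\<forall>E F. E \<in> sets M \<longrightarrow> F \<in> sets M \<longrightarrow> emeasure M E > 0 \<longrightarrow> emeasure M F > 0 \<longrightarrow>
        Mod M p (curves_qc E F C) > 0)"

definition thick_geodesic :: "'a::metric_space measure \<Rightarrow> ennreal \<Rightarrow> bool" where
  "thick_geodesic M p \<longleftrightarrow> (\<forall>C>1. thick_quasiconvex M p C)"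

definition volume_preserving :: "'b measure \<Rightarrow> 'a measure \<Rightarrow> ('b \<Rightarrow> 'a) \<Rightarrow> bool" where
  "volume_preserving MY MX f \<longleftrightarrow>
     (\<forall>A\<in>sets MX. f -` A \<in> sets MY \<and> emeasure MY (f -` A) = emeasure MX A)"

definition lip_curves :: "(real \<Rightarrow> 'a::metric_space) set" where
  "lip_curves = {\<gamma>. \<exists>L. L-lipschitz_on {0..1} \<gamma>}"

definition curves_between :: "'a::metric_space set \<Rightarrow> 'a set \<Rightarrow> (real \<Rightarrow> 'a) set" where
  "curves_between E F = {\<gamma> \<in> lip_curves. \<gamma> 0 \<in> E \<and> \<gamma> 1 \<in> F}"

definition ess_length :: "'a::metric_space measure \<Rightarrow> ennreal \<Rightarrow> (real \<Rightarrow> 'a) set \<Rightarrow> ennreal" where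
  "ess_length M p \<Gamma> = (SUP \<Gamma>0 \<in> {\<Gamma>0. Mod M p \<Gamma>0 = 0}. INF \<gamma> \<in> \<Gamma> - \<Gamma>0. len \<gamma>)"

definition dp' :: "'a::metric_space measure \<Rightarrow> ennreal \<Rightarrow> 'a \<Rightarrow> 'a \<Rightarrow> ennreal" where
  "dp' M p x y = Lim (at_right (0::real))
      (\<lambda>\<delta>. ess_length M p (curves_between (cball x \<delta>) (cball y \<delta>)))"

definition dp :: "'a::metric_space measure \<Rightarrow> ennreal \<Rightarrow> 'a \<Rightarrow> 'a \<Rightarrow> ennreal" where
  "dp M p x y = (INF (n, xs) \<in> {(n::nat, xs::nat \<Rightarrow> 'a). n \<ge> 1 \<and> xs 0 = x \<and> xs n = y}.
                   (\<Sum>i\<in>{1..n}. dp' M p (xs (i - 1)) (xs i)))"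

definition dist_open :: "('a \<Rightarrow> 'a \<Rightarrow> ennreal) \<Rightarrow> 'a set \<Rightarrow> bool" where
  "dist_open D U \<longleftrightarrow> (\<forall>x\<in>U. \<exists>r>0. {y. D x y < ennreal r} \<subseteq> U)"

definition dist_borel_sets :: "('a \<Rightarrow> 'a \<Rightarrow> ennreal) \<Rightarrow> 'a set set" where
  "dist_borel_sets D = sigma_sets UNIV {U. dist_open D U}"

end

theory Submission
  imports Defs "HOL-Probability.Distribution_Functions"
begin

text \<open>Fix K > 1 and points y, y' of Y. A curve in Y joining the \<delta>-balls around y and y' whose
  length is at most K times the distance of its endpoints is carried by f, after reparametrisation
  by arc length, to a Lipschitz curve in X joining the \<delta>-balls around f y and f y' of length at most
  K (d(y, y') + 2\<delta>), and line integrals of \<rho> along the image curve are bounded by line integrals of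
  \<rho> \<circ> f along the original one. So if a family of curves in X of zero p-modulus contained all
  these short image curves, then \<rho> \<circ> f would be admissible for the quasiconvex curves of Y
  whenever \<rho> is admissible for that family; as f preserves volume, those curves would have zero
  modulus, contradicting the p-thickness of Y. Hence d_p'(f y, f y') \<le> K d(y, y'), and K \<rightarrow> 1 gives
  the Lipschitz bound. The same argument for the identity of X gives d_p \<le> C d, so d_p-open sets are
  open, d_p-Borel sets are \<mu>-measurable, and volume preservation carries over.\<close>

section \<open>Length of curves\<close>

definition is_partition :: "real \<Rightarrow> real \<Rightarrow> nat \<Rightarrow> (nat \<Rightarrow> real) \<Rightarrow> bool" where
  "is_partition a b n t \<longleftrightarrow> t 0 = a \<and> t n = b \<and> (\<forall>i<n. t i \<le> t (Suc i))"

definition inscribed_length :: "(real \<Rightarrow> 'a::metric_space) \<Rightarrow> nat \<Rightarrow> (nat \<Rightarrow> real) \<Rightarrow> ennreal" where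
  "inscribed_length \<gamma> n t = (\<Sum>i<n. ennreal (dist (\<gamma> (t i)) (\<gamma> (t (Suc i)))))"

lemma curve_length_eq_SUP_inscribed_length:
  "curve_length \<gamma> a b = (SUP (n, t) \<in> {(n, t). is_partition a b n t}. inscribed_length \<gamma> n t)"
  by (simp add: curve_length_def is_partition_def inscribed_length_def)

lemma inscribed_length_le_curve_length:
  "is_partition a b n t \<Longrightarrow> inscribed_length \<gamma> n t \<le> curve_length \<gamma> a b"
  unfolding curve_length_eq_SUP_inscribed_length by (rule SUP_upper2[where i="(n, t)"]) auto

lemma curve_length_leI:
  "(\<And>n t. is_partition a b n t \<Longrightarrow> inscribed_length \<gamma> n t \<le> c) \<Longrightarrow> curve_length \<gamma> a b \<le> c"
  unfolding curve_length_eq_SUP_inscribed_length by (rule SUP_least) auto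

lemma is_partition_mono:
  assumes "is_partition a b n t" "i \<le> j" "j \<le> n"
  shows "t i \<le> t j"
  using assms(2,3)
proof (induction j)
  case (Suc j)
  show ?case
  proof (cases "i = Suc j")
    case False
    then have "t i \<le> t j" using Suc by simp
    also have "t j \<le> t (Suc j)" using assms(1) Suc.prems unfolding is_partition_def by auto
    finally show ?thesis .
  qed simp
qed simp

lemma is_partition_range: "is_partition a b n t \<Longrightarrow> i \<le> n \<Longrightarrow> a \<le> t i \<and> t i \<le> b"
  using is_partition_mono[of a b n t 0 i] is_partition_mono[of a b n t i n]
  unfolding is_partition_def by auto

lemma is_partition_two_points: "a \<le> b \<Longrightarrow> is_partition a b 1 (\<lambda>i. if i = 0 then a else b)"
  unfolding is_partition_def by auto

lemma is_partition_Suc_tail: "is_partition a b (Suc n) t \<Longrightarrow> is_partition (t 1) b n (\<lambda>i. t (Suc i))"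
  unfolding is_partition_def by auto

lemma inscribed_length_Suc:
  "inscribed_length \<gamma> (Suc n) t = ennreal (dist (\<gamma> (t 0)) (\<gamma> (t 1))) + inscribed_length \<gamma> n (\<lambda>i. t (Suc i))"
  by (simp only: inscribed_length_def sum.lessThan_Suc_shift One_nat_def)

lemma curve_length_refl: "curve_length \<gamma> a a = 0"
proof (rule antisym[OF curve_length_leI])
  fix n t assume "is_partition a a n t"
  then have "\<forall>i\<le>n. t i = a" using is_partition_range by force
  then show "inscribed_length \<gamma> n t \<le> 0" unfolding inscribed_length_def by simp
qed simp

lemma dist_le_curve_length: "a \<le> b \<Longrightarrow> ennreal (dist (\<gamma> a) (\<gamma> b)) \<le> curve_length \<gamma> a b"
  using inscribed_length_le_curve_length[OF is_partition_two_points, of a b \<gamma>]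
  by (simp add: inscribed_length_def)

lemma chord_add_curve_length_le:
  assumes "a \<le> b" "b \<le> c"
  shows "ennreal (dist (\<gamma> a) (\<gamma> b)) + curve_length \<gamma> b c \<le> curve_length \<gamma> a c"
proof -
  have ne: "{(n, t). is_partition b c n t} \<noteq> {}"
    using is_partition_two_points[OF assms(2)] by blast
  have "ennreal (dist (\<gamma> a) (\<gamma> b)) + curve_length \<gamma> b c =
        (SUP x \<in> {(n, t). is_partition b c n t}.
           ennreal (dist (\<gamma> a) (\<gamma> b)) + (case x of (n, t) \<Rightarrow> inscribed_length \<gamma> n t))"
    unfolding curve_length_eq_SUP_inscribed_length
    by (subst ennreal_SUP_add_right[OF ne]) (simp add: split_beta)
  also have "\<dots> \<le> curve_length \<gamma> a c"
  proof (rule SUP_least, clarsimp)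
    fix n t assume t: "is_partition b c n t"
    let ?t = "\<lambda>i. case i of 0 \<Rightarrow> a | Suc j \<Rightarrow> t j"
    have "is_partition a c (Suc n) ?t"
      using t assms unfolding is_partition_def by (auto split: nat.split)
    moreover have "inscribed_length \<gamma> (Suc n) ?t = ennreal (dist (\<gamma> a) (\<gamma> b)) + inscribed_length \<gamma> n t"
      using t unfolding inscribed_length_Suc is_partition_def by simp
    ultimately show "ennreal (dist (\<gamma> a) (\<gamma> b)) + inscribed_length \<gamma> n t \<le> curve_length \<gamma> a c"
      by (metis inscribed_length_le_curve_length)
  qed
  finally show ?thesis .
qed

lemma curve_length_superadditive:
  assumes "a \<le> b" "b \<le> c"
  shows "curve_length \<gamma> a b + curve_length \<gamma> b c \<le> curve_length \<gamma> a c"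
proof -
  have prepend: "inscribed_length \<gamma> n t + curve_length \<gamma> b c \<le> curve_length \<gamma> a c"
    if "is_partition a b n t" for n t
    using that
  proof (induction n arbitrary: a t)
    case 0
    then have "a = b" by (simp add: is_partition_def)
    then show ?case by (simp add: inscribed_length_def)
  next
    case (Suc n)
    have t0: "t 0 = a" using Suc.prems unfolding is_partition_def by simp
    have t1: "a \<le> t 1" "t 1 \<le> b" using is_partition_range[OF Suc.prems, of 1] t0 by auto
    have "inscribed_length \<gamma> (Suc n) t + curve_length \<gamma> b c =
        ennreal (dist (\<gamma> a) (\<gamma> (t 1))) + (inscribed_length \<gamma> n (\<lambda>i. t (Suc i)) + curve_length \<gamma> b c)"
      unfolding inscribed_length_Suc t0 by (simp add: add.assoc)
    also have "\<dots> \<le> ennreal (dist (\<gamma> a) (\<gamma> (t 1))) + curve_length \<gamma> (t 1) c"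
      using Suc.IH[OF is_partition_Suc_tail[OF Suc.prems]] by (simp add: add_left_mono)
    also have "\<dots> \<le> curve_length \<gamma> a c"
      using chord_add_curve_length_le t1 assms by (meson order_trans)
    finally show ?case .
  qed
  have ne: "{(n, t). is_partition a b n t} \<noteq> {}"
    using is_partition_two_points[OF assms(1)] by blast
  have "curve_length \<gamma> a b + curve_length \<gamma> b c =
      (SUP x \<in> {(n, t). is_partition a b n t}. (case x of (n, t) \<Rightarrow> inscribed_length \<gamma> n t) + curve_length \<gamma> b c)"
    unfolding curve_length_eq_SUP_inscribed_length[of \<gamma> a b]
    by (subst ennreal_SUP_add_left[OF ne]) (simp add: split_beta)
  also have "\<dots> \<le> curve_length \<gamma> a c"
    by (rule SUP_least) (auto intro: prepend)
  finally show ?thesis .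
qed

lemma curve_length_subadditive:
  assumes "a \<le> b" "b \<le> c"
  shows "curve_length \<gamma> a c \<le> curve_length \<gamma> a b + curve_length \<gamma> b c"
proof (rule curve_length_leI)
  fix n t assume "is_partition a c n t"
  then show "inscribed_length \<gamma> n t \<le> curve_length \<gamma> a b + curve_length \<gamma> b c"
    using assms
  proof (induction n arbitrary: a t)
    case 0
    then show ?case by (simp add: is_partition_def inscribed_length_def)
  next
    case (Suc n)
    have tail: "is_partition (t 1) c n (\<lambda>i. t (Suc i))" by (rule is_partition_Suc_tail[OF Suc.prems(1)])
    have t0: "t 0 = a" using Suc.prems unfolding is_partition_def by simp
    have t1: "a \<le> t 1" "t 1 \<le> c" using is_partition_range[OF Suc.prems(1), of 1] t0 by auto
    have split: "inscribed_length \<gamma> (Suc n) t =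
        ennreal (dist (\<gamma> a) (\<gamma> (t 1))) + inscribed_length \<gamma> n (\<lambda>i. t (Suc i))"
      unfolding inscribed_length_Suc t0 ..
    show ?case
    proof (cases "t 1 \<le> b")
      case True
      have "inscribed_length \<gamma> (Suc n) t \<le>
          (ennreal (dist (\<gamma> a) (\<gamma> (t 1))) + curve_length \<gamma> (t 1) b) + curve_length \<gamma> b c"
        unfolding split using Suc.IH[OF tail True Suc.prems(3)] by (simp add: add.assoc add_left_mono)
      also have "\<dots> \<le> curve_length \<gamma> a b + curve_length \<gamma> b c"
        by (rule add_right_mono[OF chord_add_curve_length_le[OF t1(1) True]])
      finally show ?thesis .
    next
      case False
      have "inscribed_length \<gamma> (Suc n) t \<le>
          ennreal (dist (\<gamma> a) (\<gamma> b)) + (ennreal (dist (\<gamma> b) (\<gamma> (t 1))) + curve_length \<gamma> (t 1) c)"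
        unfolding split add.assoc[symmetric]
        using inscribed_length_le_curve_length[OF tail, of \<gamma>] dist_triangle[of "\<gamma> a" "\<gamma> (t 1)" "\<gamma> b"]
        by (intro add_mono) (auto simp flip: ennreal_plus)
      also have "\<dots> \<le> curve_length \<gamma> a b + curve_length \<gamma> b c"
        using dist_le_curve_length[OF Suc.prems(2), of \<gamma>] chord_add_curve_length_le[of b "t 1" c \<gamma>] False t1
        by (intro add_mono) auto
      finally show ?thesis .
    qed
  qed
qed

lemma curve_length_add:
  "a \<le> b \<Longrightarrow> b \<le> c \<Longrightarrow> curve_length \<gamma> a c = curve_length \<gamma> a b + curve_length \<gamma> b c"
  using curve_length_subadditive curve_length_superadditive by (metis antisym)

lemma curve_length_mono_right: "a \<le> b \<Longrightarrow> b \<le> c \<Longrightarrow> curve_length \<gamma> a b \<le> curve_length \<gamma> a c"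
  using curve_length_add[of a b c \<gamma>] by simp

lemma curve_length_mono_left: "a \<le> b \<Longrightarrow> b \<le> c \<Longrightarrow> curve_length \<gamma> b c \<le> curve_length \<gamma> a c"
  using curve_length_add[of a b c \<gamma>] by simp

lemma curve_length_finite_subinterval:
  assumes "curve_length \<gamma> a b < \<infinity>" "a \<le> x" "x \<le> y" "y \<le> b"
  shows "curve_length \<gamma> x y < \<infinity>"
  using assms curve_length_mono_left[of a x y \<gamma>] curve_length_mono_right[of a y b \<gamma>] by auto

lemma enn2real_curve_length_add:
  assumes "curve_length \<gamma> a b < \<infinity>" "a \<le> x" "x \<le> y" "y \<le> b"
  shows "enn2real (curve_length \<gamma> a y) = enn2real (curve_length \<gamma> a x) + enn2real (curve_length \<gamma> x y)"
proof -
  have "curve_length \<gamma> a x < \<infinity>" "curve_length \<gamma> x y < \<infinity>"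
    using curve_length_finite_subinterval[OF assms(1)] assms by auto
  then show ?thesis using curve_length_add[of a x y \<gamma>] assms by (simp add: enn2real_plus)
qed

lemma curve_length_le_lipschitz:
  assumes "K-lipschitz_on {a..b} \<gamma>" "a \<le> b"
  shows "curve_length \<gamma> a b \<le> ennreal (K * (b - a))"
proof (rule curve_length_leI)
  fix n t assume t: "is_partition a b n t"
  have K: "K \<ge> 0" using assms(1) by (simp add: lipschitz_on_def)
  have "inscribed_length \<gamma> n t \<le> (\<Sum>i<n. ennreal (K * (t (Suc i) - t i)))"
    unfolding inscribed_length_def
  proof (rule sum_mono, rule ennreal_leI)
    fix i assume "i \<in> {..<n}"
    then have "t i \<in> {a..b}" "t (Suc i) \<in> {a..b}" "t i \<le> t (Suc i)"
      using is_partition_range[OF t, of i] is_partition_range[OF t, of "Suc i"] t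
      unfolding is_partition_def by auto
    then show "dist (\<gamma> (t i)) (\<gamma> (t (Suc i))) \<le> K * (t (Suc i) - t i)"
      using assms(1) unfolding lipschitz_on_def by (metis dist_real_def abs_of_nonneg diff_ge_0_iff_ge dist_commute)
  qed
  also have "\<dots> = ennreal (\<Sum>i<n. K * (t (Suc i) - t i))"
    using t K by (intro sum_ennreal) (auto simp: is_partition_def)
  also have "(\<Sum>i<n. K * (t (Suc i) - t i)) = K * (b - a)"
    using t by (simp add: sum_distrib_left[symmetric] sum_lessThan_telescope is_partition_def)
  finally show "inscribed_length \<gamma> n t \<le> ennreal (K * (b - a))" .
qed

lemma inscribed_length_le_near_start:
  assumes "is_partition a c n t" "a < c"
  shows "\<exists>v>a. v \<le> c \<and> (\<forall>u. a \<le> u \<and> u \<le> v \<longrightarrow>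
           inscribed_length \<gamma> n t \<le> ennreal (dist (\<gamma> a) (\<gamma> u)) + curve_length \<gamma> u c)"
  using assms
proof (induction n arbitrary: t)
  case 0
  then show ?case unfolding is_partition_def by simp
next
  case (Suc n)
  have t0: "t 0 = a" using Suc.prems unfolding is_partition_def by simp
  have t1: "a \<le> t 1" "t 1 \<le> c" using is_partition_range[OF Suc.prems(1), of 1] t0 by auto
  have tail: "is_partition (t 1) c n (\<lambda>i. t (Suc i))" by (rule is_partition_Suc_tail[OF Suc.prems(1)])
  have split: "inscribed_length \<gamma> (Suc n) t =
      ennreal (dist (\<gamma> a) (\<gamma> (t 1))) + inscribed_length \<gamma> n (\<lambda>i. t (Suc i))"
    unfolding inscribed_length_Suc t0 ..
  show ?case
  proof (cases "t 1 = a")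
    case True
    then show ?thesis using Suc.IH[of "\<lambda>i. t (Suc i)"] tail Suc.prems(2) split by auto
  next
    case False
    have "inscribed_length \<gamma> (Suc n) t \<le> ennreal (dist (\<gamma> a) (\<gamma> u)) + curve_length \<gamma> u c"
      if u: "a \<le> u" "u \<le> t 1" for u
    proof -
      have "inscribed_length \<gamma> (Suc n) t \<le>
          ennreal (dist (\<gamma> a) (\<gamma> u)) + (ennreal (dist (\<gamma> u) (\<gamma> (t 1))) + curve_length \<gamma> (t 1) c)"
        unfolding split add.assoc[symmetric]
        using inscribed_length_le_curve_length[OF tail, of \<gamma>] dist_triangle[of "\<gamma> a" "\<gamma> (t 1)" "\<gamma> u"]
        by (intro add_mono) (auto simp flip: ennreal_plus)
      also have "\<dots> \<le> ennreal (dist (\<gamma> a) (\<gamma> u)) + curve_length \<gamma> u c"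
        using u t1 by (intro add_left_mono chord_add_curve_length_le) auto
      finally show ?thesis .
    qed
    then show ?thesis using False t1 by (intro exI[of _ "t 1"]) auto
  qed
qed

text \<open>Choose an inscribed polygon nearly realising the length, and then move its second vertex
  so close to the start that the first chord is short, using continuity.\<close>

lemma exists_short_initial_arc:
  assumes xb: "x < b" and fin: "curve_length \<gamma> x b < \<infinity>" and cont: "continuous_on {x..b} \<gamma>"
    and e: "e > 0"
  shows "\<exists>u. x < u \<and> u \<le> b \<and> curve_length \<gamma> x u < ennreal e"
proof -
  obtain l where l: "l \<ge> 0" "curve_length \<gamma> x b = ennreal l"
    using fin by (cases "curve_length \<gamma> x b" rule: ennreal_cases) auto
  show ?thesis
  proof (cases "l < e")
    case True
    then show ?thesis using l xb by (intro exI[of _ b]) (auto simp: ennreal_less_iff)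
  next
    case False
    have "ennreal (l - e/2) < curve_length \<gamma> x b" using l False e by (simp add: ennreal_less_iff)
    then obtain n t where t: "is_partition x b n t" and lt: "ennreal (l - e/2) < inscribed_length \<gamma> n t"
      unfolding curve_length_eq_SUP_inscribed_length by (auto simp: less_SUP_iff)
    obtain v where v: "x < v" "v \<le> b"
      "\<And>u. x \<le> u \<Longrightarrow> u \<le> v \<Longrightarrow> inscribed_length \<gamma> n t \<le> ennreal (dist (\<gamma> x) (\<gamma> u)) + curve_length \<gamma> u b"
      using inscribed_length_le_near_start[OF t xb, of \<gamma>] by auto
    have "continuous (at x within {x..b}) \<gamma>"
      using cont xb by (simp add: continuous_on_eq_continuous_within)
    then obtain d where d: "d > 0" "\<And>u. u \<in> {x..b} \<Longrightarrow> dist u x < d \<Longrightarrow> dist (\<gamma> u) (\<gamma> x) < e/2"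
      unfolding continuous_within_eps_delta using e by (metis half_gt_zero)
    define u where "u = min v (x + d/2)"
    have u: "x < u" "u \<le> v" "u \<le> b" using v d unfolding u_def by auto
    have near: "dist (\<gamma> x) (\<gamma> u) < e/2"
      using d(2)[of u] u d(1) unfolding u_def by (auto simp: dist_real_def dist_commute)
    have split: "curve_length \<gamma> x b = curve_length \<gamma> x u + curve_length \<gamma> u b"
      using u by (intro curve_length_add) auto
    obtain l1 l2 where l12: "l1 \<ge> 0" "curve_length \<gamma> x u = ennreal l1"
      "l2 \<ge> 0" "curve_length \<gamma> u b = ennreal l2"
      using split fin by (cases "curve_length \<gamma> x u" rule: ennreal_cases;
          cases "curve_length \<gamma> u b" rule: ennreal_cases) auto
    have "l1 + l2 = l" using split l l12 by (simp flip: ennreal_plus)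
    moreover have "ennreal (l - e/2) < ennreal (dist (\<gamma> x) (\<gamma> u) + l2)"
      using lt v(3)[of u] u l12 by (simp add: ennreal_plus)
    then have "l - e/2 < dist (\<gamma> x) (\<gamma> u) + l2"
      using False e by (subst (asm) ennreal_less_iff) auto
    ultimately have "l1 < e" using near by linarith
    then show ?thesis using u l12 by (intro exI[of _ u]) (auto simp: ennreal_less_iff)
  qed
qed

lemma curve_length_initial_small:
  assumes fin: "curve_length \<gamma> x b < \<infinity>" and cont: "continuous_on {x..b} \<gamma>" and e: "e > 0"
  shows "\<exists>d>0. \<forall>y. x \<le> y \<longrightarrow> y \<le> b \<longrightarrow> y - x < d \<longrightarrow> curve_length \<gamma> x y < ennreal e"
proof (cases "x < b")
  case False
  show ?thesis
  proof (intro exI[of _ 1] conjI allI impI)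
    fix y assume "x \<le> y" "y \<le> b"
    then have "y = x" using False by simp
    then show "curve_length \<gamma> x y < ennreal e" using e by (simp add: curve_length_refl)
  qed simp
next
  case True
  then obtain u where u: "x < u" "u \<le> b" "curve_length \<gamma> x u < ennreal e"
    using exists_short_initial_arc[OF _ fin cont e] by blast
  show ?thesis
  proof (intro exI[of _ "u - x"] conjI allI impI)
    fix y assume "x \<le> y" "y \<le> b" "y - x < u - x"
    then have "curve_length \<gamma> x y \<le> curve_length \<gamma> x u" by (intro curve_length_mono_right) auto
    then show "curve_length \<gamma> x y < ennreal e" using u(3) by simp
  qed (use u in simp)
qed

lemma is_partition_reverse:
  assumes "is_partition (- b) (- a) n t"
  shows "is_partition a b n (\<lambda>i. - t (n - i))"
  unfolding is_partition_def
proof (intro conjI allI impI)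
  fix i assume i: "i < n"
  then have "t (n - Suc i) \<le> t (Suc (n - Suc i))" using assms unfolding is_partition_def by simp
  then show "- t (n - i) \<le> - t (n - Suc i)" using i by (simp add: Suc_diff_Suc)
qed (use assms in \<open>auto simp: is_partition_def\<close>)

lemma curve_length_reverse: "curve_length (\<lambda>s. \<gamma> (- s)) (- b) (- a) = curve_length \<gamma> a b"
proof -
  have le: "curve_length (\<lambda>s. \<gamma> (- s)) (- b) (- a) \<le> curve_length \<gamma> a b"
    for \<gamma> :: "real \<Rightarrow> 'a" and a b
  proof (rule curve_length_leI)
    fix n t assume t: "is_partition (- b) (- a) n t"
    have "inscribed_length (\<lambda>s. \<gamma> (- s)) n t = inscribed_length \<gamma> n (\<lambda>i. - t (n - i))"
      unfolding inscribed_length_def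
      by (subst sum.nat_diff_reindex[symmetric]) (simp add: dist_commute Suc_diff_Suc)
    then show "inscribed_length (\<lambda>s. \<gamma> (- s)) n t \<le> curve_length \<gamma> a b"
      using inscribed_length_le_curve_length[OF is_partition_reverse[OF t]] by simp
  qed
  show ?thesis
    using le[where \<gamma>=\<gamma> and a=a and b=b] le[where \<gamma>="\<lambda>s. \<gamma> (- s)" and a="- b" and b="- a"]
    by simp
qed

lemma curve_length_final_small:
  assumes fin: "curve_length \<gamma> a x < \<infinity>" and cont: "continuous_on {a..x} \<gamma>" and e: "e > 0"
  shows "\<exists>d>0. \<forall>y. a \<le> y \<longrightarrow> y \<le> x \<longrightarrow> x - y < d \<longrightarrow> curve_length \<gamma> y x < ennreal e"
proof -
  have "continuous_on {- x..- a} (\<lambda>s. \<gamma> (- s))"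
    by (rule continuous_on_compose2[OF cont]) (auto intro: continuous_intros)
  then obtain d where d: "d > 0"
      "\<forall>y. - x \<le> y \<longrightarrow> y \<le> - a \<longrightarrow> y + x < d \<longrightarrow> curve_length (\<lambda>s. \<gamma> (- s)) (- x) y < ennreal e"
    using curve_length_initial_small[of "\<lambda>s. \<gamma> (- s)" "- x" "- a" e] fin e
    by (auto simp: curve_length_reverse)
  show ?thesis
  proof (intro exI[of _ d] conjI allI impI)
    fix y assume "a \<le> y" "y \<le> x" "x - y < d"
    then have "curve_length (\<lambda>s. \<gamma> (- s)) (- x) (- y) < ennreal e" using d(2) by auto
    then show "curve_length \<gamma> y x < ennreal e" by (simp add: curve_length_reverse)
  qed (rule d(1))
qed

lemma continuous_on_curve_length:
  assumes fin: "curve_length \<gamma> a b < \<infinity>" and cont: "continuous_on {a..b} \<gamma>"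
  shows "continuous_on {a..b} (\<lambda>t. enn2real (curve_length \<gamma> a t))"
  unfolding continuous_on_iff
proof (intro ballI allI impI)
  fix x e :: real assume x: "x \<in> {a..b}" and e: "0 < e"
  obtain dr where dr: "dr > 0" "\<And>y. x \<le> y \<Longrightarrow> y \<le> b \<Longrightarrow> y - x < dr \<Longrightarrow> curve_length \<gamma> x y < ennreal e"
    using curve_length_initial_small[OF _ _ e, of \<gamma> x b] x
      curve_length_finite_subinterval[OF fin, of x b] continuous_on_subset[OF cont, of "{x..b}"]
    by auto
  obtain dl where dl: "dl > 0" "\<And>y. a \<le> y \<Longrightarrow> y \<le> x \<Longrightarrow> x - y < dl \<Longrightarrow> curve_length \<gamma> y x < ennreal e"
    using curve_length_final_small[OF _ _ e, of \<gamma> a x] x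
      curve_length_finite_subinterval[OF fin, of a x] continuous_on_subset[OF cont, of "{a..x}"]
    by auto
  have piece: "\<bar>enn2real (curve_length \<gamma> a v) - enn2real (curve_length \<gamma> a u)\<bar> < e"
    if "a \<le> u" "u \<le> v" "v \<le> b" "curve_length \<gamma> u v < ennreal e" for u v
  proof -
    have "enn2real (curve_length \<gamma> u v) < e"
      using that(4) by (cases "curve_length \<gamma> u v" rule: ennreal_cases) (auto simp: ennreal_less_iff)
    then show ?thesis using enn2real_curve_length_add[OF fin that(1-3)] by simp
  qed
  show "\<exists>d>0. \<forall>y\<in>{a..b}. dist y x < d \<longrightarrow>
          dist (enn2real (curve_length \<gamma> a y)) (enn2real (curve_length \<gamma> a x)) < e"
  proof (intro exI[of _ "min dr dl"] conjI ballI impI)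
    fix y assume y: "y \<in> {a..b}" "dist y x < min dr dl"
    show "dist (enn2real (curve_length \<gamma> a y)) (enn2real (curve_length \<gamma> a x)) < e"
    proof (cases "x \<le> y")
      case True
      then show ?thesis using piece[of x y] dr(2)[of y] x y by (auto simp: dist_real_def)
    next
      case False
      then show ?thesis using piece[of y x] dl(2)[of y] x y by (auto simp: dist_real_def abs_minus_commute)
    qed
  qed (use dr dl in simp)
qed

section \<open>Arc-length parametrisation\<close>

lemma dist_le_curve_length_diff:
  assumes fin: "curve_length \<gamma> a b < \<infinity>" and t: "t \<in> {a..b}" "t' \<in> {a..b}"
  shows "dist (\<gamma> t) (\<gamma> t') \<le> \<bar>enn2real (curve_length \<gamma> a t') - enn2real (curve_length \<gamma> a t)\<bar>"
proof -
  have ordered: "dist (\<gamma> u) (\<gamma> v) \<le> enn2real (curve_length \<gamma> a v) - enn2real (curve_length \<gamma> a u)"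
    if "a \<le> u" "u \<le> v" "v \<le> b" for u v
  proof -
    have "ennreal (dist (\<gamma> u) (\<gamma> v)) \<le> curve_length \<gamma> u v" by (rule dist_le_curve_length[OF that(2)])
    moreover have "curve_length \<gamma> u v < \<infinity>" by (rule curve_length_finite_subinterval[OF fin that])
    ultimately have "dist (\<gamma> u) (\<gamma> v) \<le> enn2real (curve_length \<gamma> u v)"
      by (cases "curve_length \<gamma> u v" rule: ennreal_cases) auto
    then show ?thesis using enn2real_curve_length_add[OF fin that] by simp
  qed
  show ?thesis
    using ordered[of t t'] ordered[of t' t] t by (cases "t \<le> t'") (auto simp: dist_commute)
qed

lemma arclength_param_spec:
  assumes cont: "continuous_on {0..1} \<gamma>" and len: "len \<gamma> = ennreal L" and s: "s \<in> {0..L}"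
  shows "\<exists>t\<in>{0..1}. curve_length \<gamma> 0 t = ennreal s \<and> arclength_param \<gamma> s = \<gamma> t"
proof -
  have fin: "curve_length \<gamma> 0 1 < \<infinity>" using len by (simp add: len_def)
  have "enn2real (curve_length \<gamma> 0 0) \<le> s" "s \<le> enn2real (curve_length \<gamma> 0 1)"
    using len s by (auto simp: curve_length_refl len_def)
  then obtain t where t: "t \<in> {0..1}" "enn2real (curve_length \<gamma> 0 t) = s"
    using IVT'[of "\<lambda>t. enn2real (curve_length \<gamma> 0 t)", OF _ _ _ continuous_on_curve_length[OF fin cont]]
    by auto
  have "curve_length \<gamma> 0 t < \<infinity>" using curve_length_finite_subinterval[OF fin, of 0 t] t by simp
  then have ex: "\<exists>t. t \<in> {0..1} \<and> curve_length \<gamma> 0 t = ennreal s"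
    using t s by (cases "curve_length \<gamma> 0 t" rule: ennreal_cases) auto
  show ?thesis
    using someI_ex[OF ex] unfolding arclength_param_def by auto
qed

lemma
  assumes cont: "continuous_on {0..1} \<gamma>" and len: "len \<gamma> = ennreal L" and L: "L \<ge> 0"
  shows arclength_param_0: "arclength_param \<gamma> 0 = \<gamma> 0"
    and arclength_param_len: "arclength_param \<gamma> L = \<gamma> 1"
proof -
  have fin: "curve_length \<gamma> 0 1 < \<infinity>" using len by (simp add: len_def)
  have "arclength_param \<gamma> s = \<gamma> u"
    if su: "s \<in> {0..L}" "u \<in> {0..1}" "curve_length \<gamma> 0 u = ennreal s" for s u
  proof -
    obtain t where t: "t \<in> {0..1}" "curve_length \<gamma> 0 t = ennreal s" "arclength_param \<gamma> s = \<gamma> t"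
      using arclength_param_spec[OF cont len su(1)] by blast
    show ?thesis
      using dist_le_curve_length_diff[OF fin t(1) su(2)] t su by simp
  qed
  from this[of 0 0] this[of L 1] show "arclength_param \<gamma> 0 = \<gamma> 0" "arclength_param \<gamma> L = \<gamma> 1"
    using L len by (auto simp: curve_length_refl len_def)
qed

lemma lipschitz_arclength_param:
  assumes cont: "continuous_on {0..1} \<gamma>" and len: "len \<gamma> = ennreal L"
  shows "1-lipschitz_on {0..L} (arclength_param \<gamma>)"
proof (rule lipschitz_onI)
  fix s s' assume "s \<in> {0..L}" "s' \<in> {0..L}"
  then obtain t t' where "t \<in> {0..1}" "curve_length \<gamma> 0 t = ennreal s" "arclength_param \<gamma> s = \<gamma> t"
    "t' \<in> {0..1}" "curve_length \<gamma> 0 t' = ennreal s'" "arclength_param \<gamma> s' = \<gamma> t'"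
    using arclength_param_spec[OF cont len] by meson
  moreover have "curve_length \<gamma> 0 1 < \<infinity>" using len by (simp add: len_def)
  ultimately show "dist (arclength_param \<gamma> s) (arclength_param \<gamma> s') \<le> 1 * dist s s'"
    using dist_le_curve_length_diff[of \<gamma> 0 1 t t'] \<open>s \<in> {0..L}\<close> \<open>s' \<in> {0..L}\<close>
    by (simp add: dist_real_def abs_minus_commute)
qed simp

section \<open>Line integrals along reparametrised curves\<close>

text \<open>The difference of the two distribution functions is nondecreasing, so it defines a measure
  K with M2 = M1 + K on half-open intervals and hence everywhere.\<close>

lemma finite_borel_measure_le_of_Ioc:
  fixes M1 M2 :: "real measure"
  assumes "finite_borel_measure M1" "finite_borel_measure M2"
    and Ioc_le: "\<And>a b. emeasure M1 {a<..b} \<le> emeasure M2 {a<..b}"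
  shows "M1 \<le> M2"
proof -
  interpret m1: finite_borel_measure M1 by fact
  interpret m2: finite_borel_measure M2 by fact
  have measure_Ioc_le: "measure M1 {a<..b} \<le> measure M2 {a<..b}" for a b
    using Ioc_le[of a b] m1.emeasure_eq_measure m2.emeasure_eq_measure by simp
  define F where "F x = cdf M2 x - cdf M1 x" for x
  have F_diff: "F b - F a = measure M2 {a<..b} - measure M1 {a<..b}" if "a \<le> b" for a b
    using that m1.cdf_diff_eq[of a b] m2.cdf_diff_eq[of a b] unfolding F_def
    by (cases "a = b") auto
  define K where "K = interval_measure F"
  have K_Ioc: "emeasure K {a<..b} = ennreal (measure M2 {a<..b} - measure M1 {a<..b})" if "a \<le> b" for a b
  proof -
    have "mono F"
    proof (rule monoI)
      fix x y :: real assume "x \<le> y"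
      then show "F x \<le> F y" using F_diff[of x y] measure_Ioc_le[of x y] by simp
    qed
    moreover have "continuous (at_right x) F" for x
      unfolding F_def by (intro continuous_diff m1.cdf_is_right_cont m2.cdf_is_right_cont)
    ultimately show ?thesis
      unfolding K_def using that F_diff emeasure_interval_measure_Ioc by (simp add: monoD)
  qed
  define S where "S = measure_of UNIV (sets borel) (\<lambda>A. emeasure M1 A + emeasure K A)"
  have S: "emeasure S A = emeasure M1 A + emeasure K A" if "A \<in> sets borel" for A
    unfolding S_def
  proof (rule emeasure_measure_of_sigma[OF _ _ _ that])
    show "sigma_algebra UNIV (sets borel)" using sets.sigma_algebra_axioms[of borel] by simp
    show "positive (sets borel) (\<lambda>A. emeasure M1 A + emeasure K A)" by (simp add: positive_def)
    show "countably_additive (sets borel) (\<lambda>A. emeasure M1 A + emeasure K A)"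
      unfolding countably_additive_def
    proof (intro allI impI)
      fix A :: "nat \<Rightarrow> real set"
      assume "range A \<subseteq> sets borel" "disjoint_family A"
      then show "(\<Sum>i. emeasure M1 (A i) + emeasure K (A i)) = emeasure M1 (\<Union>i. A i) + emeasure K (\<Union>i. A i)"
        using suminf_emeasure[of A M1] suminf_emeasure[of A K] m1.M_is_borel
        by (simp add: suminf_add[symmetric] K_def)
    qed
  qed
  define E where "E = range (\<lambda>(a, b). {a<..b::real})"
  have sets_E: "sets borel = sigma_sets UNIV E"
    unfolding E_def by (subst borel_sigma_sets_Ioc) (simp add: sets_measure_of)
  have "Int_stable E"
    unfolding E_def Int_stable_def by (auto intro!: rev_image_eqI[of "(max _ _, min _ _)"])
  moreover have "emeasure M2 X = emeasure S X" if "X \<in> E" for X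
  proof -
    obtain a b where X: "X = {a<..b}" using \<open>X \<in> E\<close> unfolding E_def by auto
    show ?thesis
    proof (cases "a \<le> b")
      case True
      have "emeasure M2 X = ennreal (measure M1 X) + ennreal (measure M2 X - measure M1 X)"
        unfolding X using measure_Ioc_le[of a b] m2.emeasure_eq_measure by (simp flip: ennreal_plus)
      also have "\<dots> = emeasure S X"
        unfolding X using S[of "{a<..b}"] K_Ioc[OF True] m1.emeasure_eq_measure by simp
      finally show ?thesis .
    next
      case False
      then have "X = {}" using X by auto
      then show ?thesis by simp
    qed
  qed
  moreover have "sets S = sets borel"
    unfolding S_def using sets.sigma_sets_eq[of borel] by simp
  then have "sets M2 = sigma_sets UNIV E" "sets S = sigma_sets UNIV E"
    using sets_E m2.M_is_borel by simp_all
  moreover have "range (\<lambda>n. {- real n<..real n}) \<subseteq> E" unfolding E_def by auto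
  ultimately have "M2 = S"
    using UN_Ioc_eq_UNIV by (intro measure_eqI_generator_eq[where A="\<lambda>n. {- real n<..real n}"]) auto
  then show "M1 \<le> M2"
    using m1.M_is_borel m2.M_is_borel by (auto simp: le_measure S)
qed

lemma emeasure_Ioc_le_of_contraction_preimage:
  fixes \<sigma> :: "real \<Rightarrow> real"
  assumes ab: "a \<le> b" and mono: "mono_on {a..b} \<sigma>" and lip: "1-lipschitz_on {a..b} \<sigma>"
    and T: "T \<in> sets lborel" "{s \<in> {a..b}. \<sigma> s \<in> {c<..d}} \<subseteq> T"
  shows "emeasure lborel ({\<sigma> a..\<sigma> b} \<inter> {c<..d}) \<le> emeasure lborel T"
proof -
  define l where "l = max c (\<sigma> a)"
  define r where "r = min d (\<sigma> b)"
  have "emeasure lborel ({\<sigma> a..\<sigma> b} \<inter> {c<..d}) \<le> emeasure lborel {l..r}"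
    unfolding l_def r_def by (intro emeasure_mono) auto
  also have "\<dots> \<le> emeasure lborel T"
  proof (cases "l < r")
    case False
    then have "emeasure lborel {l..r} = 0" by (simp add: emeasure_lborel_Icc_eq)
    then show ?thesis by simp
  next
    case True
    have "\<sigma> a \<le> r" "r \<le> \<sigma> b" using True mono_onD[OF mono _ _ ab] ab unfolding l_def r_def by auto
    then obtain t where t: "t \<in> {a..b}" "\<sigma> t = r"
      using IVT'[of \<sigma> a r b, OF _ _ ab lipschitz_on_continuous_on[OF lip]] by auto
    have \<sigma>_incr: "\<sigma> v - \<sigma> u \<le> v - u" if "u \<in> {a..b}" "v \<in> {a..b}" "u \<le> v" for u v
    proof -
      have "\<bar>\<sigma> v - \<sigma> u\<bar> \<le> 1 * \<bar>v - u\<bar>"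
        using lip that(1,2) unfolding lipschitz_on_def dist_real_def by blast
      then show ?thesis using that(3) by (simp add: abs_le_iff)
    qed
    have "r - l \<le> t - a" using \<sigma>_incr[of a t] t ab unfolding l_def by auto
    have "{t - (r - l)<..t} \<subseteq> T"
    proof
      fix s assume s: "s \<in> {t - (r - l)<..t}"
      then have s_ab: "s \<in> {a..b}" using \<open>r - l \<le> t - a\<close> t(1) by auto
      have "\<sigma> s \<le> r" using mono_onD[OF mono s_ab t(1)] s t(2) by auto
      moreover have "l < \<sigma> s" using \<sigma>_incr[OF s_ab t(1)] s t(2) by auto
      ultimately show "s \<in> T" using s_ab T(2) unfolding l_def r_def by auto
    qed
    then have "emeasure lborel {t - (r - l)<..t} \<le> emeasure lborel T"
      using T(1) by (intro emeasure_mono) auto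
    then show ?thesis using True by simp
  qed
  finally show ?thesis .
qed

text \<open>The image of Lebesgue measure on [a, b] under the contraction dominates Lebesgue measure on
  [\<sigma> a, \<sigma> b]; for the push-forward, \<sigma> is first extended to a contraction of the whole line.\<close>

lemma set_nn_integral_le_monotone_contraction:
  fixes \<sigma> :: "real \<Rightarrow> real" and g :: "real \<Rightarrow> ennreal"
  assumes ab: "a \<le> b" and g: "g \<in> borel_measurable borel"
    and mono: "mono_on {a..b} \<sigma>" and lip: "1-lipschitz_on {a..b} \<sigma>"
  shows "(\<integral>\<^sup>+u\<in>{\<sigma> a..\<sigma> b}. g u \<partial>lborel) \<le> (\<integral>\<^sup>+s\<in>{a..b}. g (\<sigma> s) \<partial>lborel)"
proof -
  define clamp where "clamp s = max a (min b s)" for s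
  define \<sigma>' where "\<sigma>' s = \<sigma> (clamp s)" for s
  have clamp_id: "s \<in> {a..b} \<Longrightarrow> clamp s = s" for s unfolding clamp_def by auto
  have "1-lipschitz_on UNIV clamp"
    unfolding clamp_def by (rule lipschitz_onI) (auto simp: dist_real_def)
  moreover have "1-lipschitz_on (range clamp) \<sigma>"
    by (rule lipschitz_on_subset[OF lip]) (use ab in \<open>auto simp: clamp_def\<close>)
  ultimately have "1-lipschitz_on UNIV \<sigma>'"
    unfolding \<sigma>'_def using lipschitz_on_compose2 by fastforce
  then have \<sigma>'_meas: "\<sigma>' \<in> borel_measurable borel"
    by (intro borel_measurable_continuous_onI lipschitz_on_continuous_on)
  define M0 where "M0 = density lborel (indicator {a..b})"
  define M1 where "M1 = density lborel (indicator {\<sigma> a..\<sigma> b})"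
  define M2 where "M2 = distr M0 borel \<sigma>'"
  have \<sigma>'_meas0: "\<sigma>' \<in> M0 \<rightarrow>\<^sub>M borel" using \<sigma>'_meas unfolding M0_def by simp
  have M1: "emeasure M1 A = emeasure lborel ({\<sigma> a..\<sigma> b} \<inter> A)" if "A \<in> sets borel" for A
    unfolding M1_def using that by (intro emeasure_restricted) auto
  have M2: "emeasure M2 A = emeasure lborel ({a..b} \<inter> \<sigma>' -` A)" if "A \<in> sets borel" for A
  proof -
    have "emeasure M2 A = emeasure M0 (\<sigma>' -` A)"
      unfolding M2_def using emeasure_distr[OF \<sigma>'_meas0] that by (simp add: M0_def)
    also have "\<dots> = emeasure lborel ({a..b} \<inter> \<sigma>' -` A)"
      unfolding M0_def using measurable_sets_borel[OF \<sigma>'_meas that] by (intro emeasure_restricted) auto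
    finally show ?thesis .
  qed
  have "finite_borel_measure M1" "finite_borel_measure M2"
    using M1[of UNIV] M2[of UNIV]
    by (auto simp: finite_borel_measure_def finite_borel_measure_axioms_def M1_def M2_def M0_def
        emeasure_lborel_Icc_eq intro!: finite_measureI)
  moreover have "emeasure M1 {c<..d} \<le> emeasure M2 {c<..d}" for c d
  proof -
    have "emeasure lborel ({\<sigma> a..\<sigma> b} \<inter> {c<..d}) \<le> emeasure lborel ({a..b} \<inter> \<sigma>' -` {c<..d})"
      using measurable_sets_borel[OF \<sigma>'_meas, of "{c<..d}"]
      by (intro emeasure_Ioc_le_of_contraction_preimage[OF ab mono lip]) (auto simp: \<sigma>'_def clamp_id)
    then show ?thesis using M1[of "{c<..d}"] M2[of "{c<..d}"] by simp
  qed
  ultimately have "M1 \<le> M2" by (rule finite_borel_measure_le_of_Ioc)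
  have "(\<integral>\<^sup>+u\<in>{\<sigma> a..\<sigma> b}. g u \<partial>lborel) = integral\<^sup>N M1 g"
    unfolding M1_def using g by (simp add: nn_integral_density mult.commute)
  also have "\<dots> \<le> integral\<^sup>N M2 g"
    by (rule nn_integral_mono_measure[OF _ \<open>M1 \<le> M2\<close>]) (simp add: M1_def M2_def)
  also have "\<dots> = (\<integral>\<^sup>+s. g (\<sigma>' s) \<partial>M0)"
    unfolding M2_def using g by (simp add: nn_integral_distr[OF \<sigma>'_meas0])
  also have "\<dots> = (\<integral>\<^sup>+s\<in>{a..b}. g (\<sigma> s) \<partial>lborel)"
    unfolding M0_def using g \<sigma>'_meas
    by (simp add: nn_integral_density mult.commute) (auto intro!: nn_integral_cong simp: \<sigma>'_def clamp_id indicator_def)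
  finally show ?thesis .
qed

lemma
  assumes lip: "K-lipschitz_on {a..b} \<gamma>"
  shows mono_on_curve_length: "mono_on {a..b} (\<lambda>t. enn2real (curve_length \<gamma> a t))"
    and lipschitz_on_curve_length: "K-lipschitz_on {a..b} (\<lambda>t. enn2real (curve_length \<gamma> a t))"
proof -
  have increment: "enn2real (curve_length \<gamma> a t) - enn2real (curve_length \<gamma> a s) \<in> {0..K * (t - s)}"
    if "s \<in> {a..b}" "t \<in> {a..b}" "s \<le> t" for s t
  proof -
    have "curve_length \<gamma> a b \<le> ennreal (K * (b - a))"
      using curve_length_le_lipschitz[OF lip] that by simp
    then have fin: "curve_length \<gamma> a b < \<infinity>" by (simp add: le_less_trans)
    have "curve_length \<gamma> s t \<le> ennreal (K * (t - s))"
      using curve_length_le_lipschitz[OF lipschitz_on_subset[OF lip]] that by simp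
    then have "enn2real (curve_length \<gamma> s t) \<le> K * (t - s)"
      using lip that by (cases "curve_length \<gamma> s t" rule: ennreal_cases) (auto simp: lipschitz_on_def)
    then show ?thesis using enn2real_curve_length_add[OF fin, of s t] that by simp
  qed
  show "mono_on {a..b} (\<lambda>t. enn2real (curve_length \<gamma> a t))"
    by (rule mono_onI) (use increment in fastforce)
  show "K-lipschitz_on {a..b} (\<lambda>t. enn2real (curve_length \<gamma> a t))"
  proof (rule lipschitz_onI)
    fix s t assume "s \<in> {a..b}" "t \<in> {a..b}"
    then show "dist (enn2real (curve_length \<gamma> a s)) (enn2real (curve_length \<gamma> a t)) \<le> K * dist s t"
      using increment[of s t] increment[of t s]
      by (cases "s \<le> t") (auto simp: dist_real_def abs_minus_commute)
  qed (use lip in \<open>simp add: lipschitz_on_def\<close>)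
qed

text \<open>The arc-length parametrisation of the constant-speed curve t \<mapsto> h (L t) is h composed
  with its length function, which is monotone and 1-Lipschitz; the line integral is therefore
  an integral against the image of Lebesgue measure under that length function.\<close>

lemma line_integral_lipschitz_reparam_le:
  fixes h :: "real \<Rightarrow> 'a::metric_space" and \<rho> :: "'a \<Rightarrow> ennreal"
  assumes lip: "1-lipschitz_on {0..L} h" and L: "L \<ge> 0" and \<rho>: "\<rho> \<in> borel_measurable borel"
  shows "line_integral \<rho> (\<lambda>t. h (L * t)) \<le> (\<integral>\<^sup>+s\<in>{0..L}. \<rho> (h s) \<partial>lborel)"
proof -
  define \<zeta> where "\<zeta> t = h (L * t)" for t
  have "L-lipschitz_on {0..1} (\<lambda>t. L * t)"
    by (rule lipschitz_onI) (use L in \<open>auto simp: dist_real_def abs_mult simp flip: right_diff_distrib\<close>)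
  moreover have "1-lipschitz_on ((\<lambda>t. L * t) ` {0..1}) h"
    by (rule lipschitz_on_subset[OF lip]) (use L in \<open>auto simp: mult_left_le\<close>)
  ultimately have \<zeta>_lip: "L-lipschitz_on {0..1} \<zeta>"
    unfolding \<zeta>_def using lipschitz_on_compose2[of L "{0..1}" "\<lambda>t. L * t" 1 h] by simp
  have \<zeta>_cont: "continuous_on {0..1} \<zeta>" by (rule lipschitz_on_continuous_on[OF \<zeta>_lip])
  define L' where "L' = enn2real (len \<zeta>)"
  have "len \<zeta> \<le> ennreal L" using curve_length_le_lipschitz[OF \<zeta>_lip] by (simp add: len_def)
  then have len_\<zeta>: "len \<zeta> = ennreal L'"
    unfolding L'_def by (cases "len \<zeta>" rule: ennreal_cases) (auto simp: top_unique)
  then have fin: "curve_length \<zeta> 0 1 < \<infinity>" by (simp add: len_def)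
  show ?thesis
  proof (cases "L = 0")
    case True
    then have "L' = 0" using \<open>len \<zeta> \<le> ennreal L\<close> by (simp add: L'_def)
    then show ?thesis
      unfolding \<zeta>_def[symmetric] line_integral_def L'_def[symmetric]
      by (simp add: nn_integral_indicator_singleton mult.commute)
  next
    case False
    define \<sigma> where "\<sigma> s = enn2real (curve_length \<zeta> 0 (s / L))" for s
    have "(1/L)-lipschitz_on {0..L} (\<lambda>s. s / L)"
      by (rule lipschitz_onI) (use L in \<open>auto simp: dist_real_def abs_divide simp flip: diff_divide_distrib\<close>)
    moreover have "L-lipschitz_on ((\<lambda>s. s / L) ` {0..L}) (\<lambda>t. enn2real (curve_length \<zeta> 0 t))"
      by (rule lipschitz_on_subset[OF lipschitz_on_curve_length[OF \<zeta>_lip]]) (use L in \<open>auto simp: divide_le_eq_1\<close>)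
    ultimately have \<sigma>_lip: "1-lipschitz_on {0..L} \<sigma>"
      unfolding \<sigma>_def using lipschitz_on_compose2[of "1/L" "{0..L}" "\<lambda>s. s / L" L] False by simp
    have \<sigma>_mono: "mono_on {0..L} \<sigma>"
      using mono_onD[OF mono_on_curve_length[OF \<zeta>_lip]] L False
      by (intro mono_onI) (auto simp: \<sigma>_def divide_right_mono)
    have \<sigma>_0: "\<sigma> 0 = 0" and \<sigma>_L: "\<sigma> L = L'"
      using False by (simp_all add: \<sigma>_def L'_def len_def curve_length_refl)
    have arc_\<sigma>: "arclength_param \<zeta> (\<sigma> s) = h s" if s: "s \<in> {0..L}" for s
    proof -
      have s': "s / L \<in> {0..1}" using s L False by auto
      have "\<sigma> s \<in> {0..L'}" using mono_onD[OF \<sigma>_mono, of 0 s] mono_onD[OF \<sigma>_mono, of s L] s \<sigma>_0 \<sigma>_L by auto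
      then obtain t where t: "t \<in> {0..1}" "curve_length \<zeta> 0 t = ennreal (\<sigma> s)" "arclength_param \<zeta> (\<sigma> s) = \<zeta> t"
        using arclength_param_spec[OF \<zeta>_cont len_\<zeta>] by blast
      have "dist (\<zeta> t) (\<zeta> (s / L)) \<le> 0"
        using dist_le_curve_length_diff[OF fin t(1) s'] t(2) \<sigma>_def by simp
      then show ?thesis using t(3) False unfolding \<zeta>_def by simp
    qed
    define g where "g u = \<rho> (arclength_param \<zeta> (max 0 (min L' u)))" for u
    have "continuous_on {0..L'} (arclength_param \<zeta>)"
      by (rule lipschitz_on_continuous_on[OF lipschitz_arclength_param[OF \<zeta>_cont len_\<zeta>]])
    then have "continuous_on UNIV (\<lambda>u. arclength_param \<zeta> (max 0 (min L' u)))"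
      by (rule continuous_on_compose2) (auto intro!: continuous_intros simp: L'_def)
    then have "(\<lambda>u. arclength_param \<zeta> (max 0 (min L' u))) \<in> borel_measurable borel"
      by (rule borel_measurable_continuous_onI)
    then have g: "g \<in> borel_measurable borel"
      unfolding g_def using \<rho> by (rule measurable_compose)
    have "line_integral \<rho> \<zeta> = (\<integral>\<^sup>+u\<in>{\<sigma> 0..\<sigma> L}. g u \<partial>lborel)"
      unfolding line_integral_def L'_def[symmetric] \<sigma>_0 \<sigma>_L
      by (intro nn_integral_cong) (auto simp: g_def indicator_def)
    also have "\<dots> \<le> (\<integral>\<^sup>+s\<in>{0..L}. g (\<sigma> s) \<partial>lborel)"
      by (rule set_nn_integral_le_monotone_contraction[OF L g \<sigma>_mono \<sigma>_lip])
    also have "\<dots> = (\<integral>\<^sup>+s\<in>{0..L}. \<rho> (h s) \<partial>lborel)"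
      using mono_onD[OF \<sigma>_mono, of 0] mono_onD[OF \<sigma>_mono, of _ L] \<sigma>_0 \<sigma>_L
      by (intro nn_integral_cong) (auto simp: g_def indicator_def arc_\<sigma>)
    finally show ?thesis unfolding \<zeta>_def .
  qed
qed

definition image_curve :: "('b::metric_space \<Rightarrow> 'a) \<Rightarrow> (real \<Rightarrow> 'b) \<Rightarrow> real \<Rightarrow> 'a" where
  "image_curve f \<gamma> t = f (arclength_param \<gamma> (enn2real (len \<gamma>) * t))"

context
  fixes f :: "'b::metric_space \<Rightarrow> 'a::metric_space" and \<gamma> :: "real \<Rightarrow> 'b"
  assumes flip: "1-lipschitz_on UNIV f"
    and cont: "continuous_on {0..1} \<gamma>" and fin: "len \<gamma> < \<infinity>"
begin

private lemma len_eq: "len \<gamma> = ennreal (enn2real (len \<gamma>))"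
  using fin by (cases "len \<gamma>" rule: ennreal_cases) auto

private lemma lipschitz_f_arclength_param:
  "1-lipschitz_on {0..enn2real (len \<gamma>)} (\<lambda>s. f (arclength_param \<gamma> s))"
  using lipschitz_on_compose2[OF lipschitz_arclength_param[OF cont len_eq]
      lipschitz_on_subset[OF flip]]
  by simp

lemma lipschitz_image_curve: "(enn2real (len \<gamma>))-lipschitz_on {0..1} (image_curve f \<gamma>)"
proof -
  let ?L = "enn2real (len \<gamma>)"
  have "?L-lipschitz_on {0..1} (\<lambda>t. ?L * t)"
    by (rule lipschitz_onI) (auto simp: dist_real_def abs_mult simp flip: right_diff_distrib)
  moreover have "1-lipschitz_on ((\<lambda>t. ?L * t) ` {0..1}) (\<lambda>s. f (arclength_param \<gamma> s))"
    by (rule lipschitz_on_subset[OF lipschitz_f_arclength_param]) (auto simp: mult_left_le)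
  ultimately show ?thesis
    unfolding image_curve_def using lipschitz_on_compose2[of ?L "{0..1}" "\<lambda>t. ?L * t" 1] by simp
qed

lemma image_curve_0: "image_curve f \<gamma> 0 = f (\<gamma> 0)"
  and image_curve_1: "image_curve f \<gamma> 1 = f (\<gamma> 1)"
  using arclength_param_0[OF cont len_eq] arclength_param_len[OF cont len_eq]
  by (simp_all add: image_curve_def)

lemma len_image_curve_le: "len (image_curve f \<gamma>) \<le> len \<gamma>"
  using curve_length_le_lipschitz[OF lipschitz_image_curve] len_eq by (simp add: len_def)

lemma line_integral_image_curve_le:
  assumes "\<rho> \<in> borel_measurable borel"
  shows "line_integral \<rho> (image_curve f \<gamma>) \<le> line_integral (\<lambda>x. \<rho> (f x)) \<gamma>"
  unfolding image_curve_def line_integral_def[of "\<lambda>x. \<rho> (f x)"]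
  by (rule line_integral_lipschitz_reparam_le[OF lipschitz_f_arclength_param _ assms]) simp

end

section \<open>Modulus under volume-preserving maps\<close>

lemma measurable_of_borel_mms:
  assumes "mms M" "g \<in> borel_measurable borel"
  shows "g \<in> borel_measurable M"
proof -
  have "borel \<rightarrow>\<^sub>M borel \<subseteq> M \<rightarrow>\<^sub>M (borel :: 'b measure)"
    by (rule measurable_mono) (use assms(1) in \<open>auto simp: mms_def\<close>)
  then show ?thesis using assms(2) by auto
qed

context
  fixes \<mu> :: "'a::metric_space measure" and \<mu>Y :: "'b::metric_space measure" and f :: "'b \<Rightarrow> 'a"
  assumes mY: "mms \<mu>Y" and mX: "mms \<mu>" and vp: "volume_preserving \<mu>Y \<mu> f"
begin

lemma measurable_volume_preserving: "f \<in> \<mu>Y \<rightarrow>\<^sub>M \<mu>"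
  using vp mY mX unfolding measurable_def volume_preserving_def mms_def by auto

lemma distr_volume_preserving: "distr \<mu>Y \<mu> f = \<mu>"
proof (rule measure_eqI)
  fix A assume "A \<in> sets (distr \<mu>Y \<mu> f)"
  then show "emeasure (distr \<mu>Y \<mu> f) A = emeasure \<mu> A"
    using emeasure_distr[OF measurable_volume_preserving] vp mY
    by (simp add: volume_preserving_def mms_def)
qed simp

lemma nn_integral_volume_preserving:
  assumes "g \<in> borel_measurable borel"
  shows "(\<integral>\<^sup>+y. g (f y) \<partial>\<mu>Y) = (\<integral>\<^sup>+x. g x \<partial>\<mu>)"
proof -
  have "(\<integral>\<^sup>+y. g (f y) \<partial>\<mu>Y) = (\<integral>\<^sup>+x. g x \<partial>distr \<mu>Y \<mu> f)"
    by (rule nn_integral_distr[symmetric, OF measurable_volume_preserving])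
      (simp add: measurable_of_borel_mms[OF mX assms])
  then show ?thesis by (simp add: distr_volume_preserving)
qed

lemma esssup_volume_preserving:
  fixes g :: "'a \<Rightarrow> ennreal"
  assumes g: "g \<in> borel_measurable borel"
  shows "esssup \<mu>Y (\<lambda>y. g (f y)) = esssup \<mu> g"
proof -
  have gX: "g \<in> borel_measurable \<mu>" by (rule measurable_of_borel_mms[OF mX g])
  then have gY: "(\<lambda>y. g (f y)) \<in> borel_measurable \<mu>Y"
    using measurable_volume_preserving by (simp add: measurable_compose)
  have "emeasure \<mu>Y {y \<in> space \<mu>Y. z < g (f y)} = emeasure \<mu> {x \<in> space \<mu>. z < g x}" for z
  proof -
    have "{y \<in> space \<mu>Y. z < g (f y)} = f -` {x \<in> space \<mu>. z < g x}"
      using mX mY by (auto simp: mms_def)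
    moreover have "{x \<in> space \<mu>. z < g x} \<in> sets \<mu>" using gX by measurable
    then have "emeasure \<mu>Y (f -` {x \<in> space \<mu>. z < g x}) = emeasure \<mu> {x \<in> space \<mu>. z < g x}"
      using vp unfolding volume_preserving_def by blast
    ultimately show ?thesis by (simp only:)
  qed
  then show ?thesis using esssup_eq[OF gX] esssup_eq[OF gY] by simp
qed

lemma Mod_le_of_admissible_comp:
  assumes adm: "\<And>\<rho>. admissible \<Gamma>0 \<rho> \<Longrightarrow> admissible \<Gamma>1 (\<lambda>y. \<rho> (f y))"
  shows "Mod \<mu>Y p \<Gamma>1 \<le> Mod \<mu> p \<Gamma>0"
proof -
  have comp: "\<exists>\<rho>'\<in>{\<rho>. admissible \<Gamma>1 \<rho>}. esssup \<mu>Y \<rho>' = esssup \<mu> \<rho> \<and>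
      (\<integral>\<^sup>+y. enn_powr (\<rho>' y) q \<partial>\<mu>Y) = (\<integral>\<^sup>+x. enn_powr (\<rho> x) q \<partial>\<mu>)"
    if "\<rho> \<in> {\<rho>. admissible \<Gamma>0 \<rho>}" for \<rho> q
  proof (intro bexI[of _ "\<lambda>y. \<rho> (f y)"] conjI)
    have \<rho>: "\<rho> \<in> borel_measurable borel" using that by (simp add: admissible_def)
    then show "esssup \<mu>Y (\<lambda>y. \<rho> (f y)) = esssup \<mu> \<rho>" by (rule esssup_volume_preserving)
    have "(\<lambda>x. enn_powr (\<rho> x) q) \<in> borel_measurable borel"
      using \<rho> unfolding enn_powr_def by measurable
    then show "(\<integral>\<^sup>+y. enn_powr (\<rho> (f y)) q \<partial>\<mu>Y) = (\<integral>\<^sup>+x. enn_powr (\<rho> x) q \<partial>\<mu>)"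
      by (rule nn_integral_volume_preserving)
  qed (use that adm in simp)
  have "(INF \<rho>\<in>{\<rho>. admissible \<Gamma>1 \<rho>}. esssup \<mu>Y \<rho>) \<le> (INF \<rho>\<in>{\<rho>. admissible \<Gamma>0 \<rho>}. esssup \<mu> \<rho>)"
    by (rule INF_mono) (use comp in fastforce)
  moreover have "(INF \<rho>\<in>{\<rho>. admissible \<Gamma>1 \<rho>}. \<integral>\<^sup>+x. enn_powr (\<rho> x) q \<partial>\<mu>Y)
      \<le> (INF \<rho>\<in>{\<rho>. admissible \<Gamma>0 \<rho>}. \<integral>\<^sup>+x. enn_powr (\<rho> x) q \<partial>\<mu>)" for q
    by (rule INF_mono) (use comp[where q=q] in fastforce)
  ultimately show ?thesis by (simp add: Mod_def)
qed

end

section \<open>The metric d_p\<close>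

lemma admissible_comp_image_curve:
  assumes flip: "1-lipschitz_on UNIV f"
    and \<Gamma>1: "\<And>\<gamma>. \<gamma> \<in> \<Gamma>1 \<Longrightarrow> continuous_on {0..1} \<gamma> \<and> len \<gamma> < \<infinity> \<and> image_curve f \<gamma> \<in> \<Gamma>0"
    and adm: "admissible \<Gamma>0 \<rho>"
  shows "admissible \<Gamma>1 (\<lambda>x. \<rho> (f x))"
  unfolding admissible_def
proof (intro conjI ballI)
  have \<rho>: "\<rho> \<in> borel_measurable borel" using adm by (simp add: admissible_def)
  moreover have "f \<in> borel_measurable borel"
    by (intro borel_measurable_continuous_onI lipschitz_on_continuous_on[OF flip])
  ultimately show "(\<lambda>x. \<rho> (f x)) \<in> borel_measurable borel" by measurable
  fix \<gamma> assume "\<gamma> \<in> \<Gamma>1"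
  then have "1 \<le> line_integral \<rho> (image_curve f \<gamma>)" using \<Gamma>1 adm by (simp add: admissible_def)
  also have "\<dots> \<le> line_integral (\<lambda>x. \<rho> (f x)) \<gamma>"
    using line_integral_image_curve_le[OF flip _ _ \<rho>] \<Gamma>1[OF \<open>\<gamma> \<in> \<Gamma>1\<close>] by blast
  finally show "1 \<le> line_integral (\<lambda>x. \<rho> (f x)) \<gamma>" .
qed

lemma image_curve_mem_curves_between:
  assumes flip: "1-lipschitz_on UNIV f" and K: "K \<ge> 0"
    and \<gamma>: "\<gamma> \<in> curves_qc (ball y \<delta>) (ball y' \<delta>) K"
  shows "image_curve f \<gamma> \<in> curves_between (cball (f y) \<delta>) (cball (f y') \<delta>)"
    and "len (image_curve f \<gamma>) \<le> ennreal (K * (dist y y' + 2 * \<delta>))"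
proof -
  have cont: "continuous_on {0..1} \<gamma>" and ends: "dist y (\<gamma> 0) < \<delta>" "dist y' (\<gamma> 1) < \<delta>"
    and len: "len \<gamma> \<le> ennreal (K * dist (\<gamma> 0) (\<gamma> 1))"
    using \<gamma> by (auto simp: curves_qc_def)
  then have fin: "len \<gamma> < \<infinity>" using le_less_trans by fastforce
  have "dist (f y) (f (\<gamma> 0)) \<le> dist y (\<gamma> 0)" "dist (f y') (f (\<gamma> 1)) \<le> dist y' (\<gamma> 1)"
    using flip by (simp_all add: lipschitz_on_def)
  then show "image_curve f \<gamma> \<in> curves_between (cball (f y) \<delta>) (cball (f y') \<delta>)"
    using lipschitz_image_curve[OF flip cont fin] ends
    by (auto simp: curves_between_def lip_curves_def image_curve_0[OF flip cont fin]
        image_curve_1[OF flip cont fin])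
  have "dist (\<gamma> 0) (\<gamma> 1) \<le> dist y y' + 2 * \<delta>"
    using dist_triangle[of "\<gamma> 0" "\<gamma> 1" y] dist_triangle[of y "\<gamma> 1" y'] ends
    by (simp add: dist_commute)
  then have "ennreal (K * dist (\<gamma> 0) (\<gamma> 1)) \<le> ennreal (K * (dist y y' + 2 * \<delta>))"
    using K by (intro ennreal_leI mult_left_mono)
  then show "len (image_curve f \<gamma>) \<le> ennreal (K * (dist y y' + 2 * \<delta>))"
    using len_image_curve_le[OF flip cont fin] len by order
qed

lemma ess_length_curves_between_le:
  fixes \<mu> :: "'a::metric_space measure" and \<mu>Y :: "'b::metric_space measure" and f :: "'b \<Rightarrow> 'a"
  assumes mY: "mms \<mu>Y" and mX: "mms \<mu>" and vp: "volume_preserving \<mu>Y \<mu> f"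
    and flip: "1-lipschitz_on UNIV f" and thick: "thick_quasiconvex \<mu>Y p K" and K: "K \<ge> 0"
    and \<delta>: "\<delta> > 0"
  shows "ess_length \<mu> p (curves_between (cball (f y) \<delta>) (cball (f y') \<delta>))
    \<le> ennreal (K * (dist y y' + 2 * \<delta>))"
  unfolding ess_length_def
proof (rule SUP_least, rule ccontr)
  define \<Gamma> where "\<Gamma> = curves_between (cball (f y) \<delta>) (cball (f y') \<delta>)"
  define \<Gamma>1 where "\<Gamma>1 = curves_qc (ball y \<delta>) (ball y' \<delta>) K"
  fix \<Gamma>0 assume "\<Gamma>0 \<in> {\<Gamma>0. Mod \<mu> p \<Gamma>0 = 0}"
    and long: "\<not> (INF \<gamma>\<in>curves_between (cball (f y) \<delta>) (cball (f y') \<delta>) - \<Gamma>0. len \<gamma>)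
                  \<le> ennreal (K * (dist y y' + 2 * \<delta>))"
  have short_null: "\<zeta> \<in> \<Gamma>0" if "\<zeta> \<in> \<Gamma>" "len \<zeta> \<le> ennreal (K * (dist y y' + 2 * \<delta>))" for \<zeta>
    using long that INF_lower2[of \<zeta> "\<Gamma> - \<Gamma>0" len] unfolding \<Gamma>_def by auto
  have "Mod \<mu>Y p \<Gamma>1 \<le> Mod \<mu> p \<Gamma>0"
  proof (rule Mod_le_of_admissible_comp[OF mY mX vp admissible_comp_image_curve[OF flip]])
    fix \<gamma> assume "\<gamma> \<in> \<Gamma>1"
    then have "continuous_on {0..1} \<gamma>" "len \<gamma> \<le> ennreal (K * dist (\<gamma> 0) (\<gamma> 1))"
      by (simp_all add: \<Gamma>1_def curves_qc_def)
    then show "continuous_on {0..1} \<gamma> \<and> len \<gamma> < \<infinity> \<and> image_curve f \<gamma> \<in> \<Gamma>0"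
      using image_curve_mem_curves_between[OF flip K] \<open>\<gamma> \<in> \<Gamma>1\<close> short_null
      unfolding \<Gamma>_def \<Gamma>1_def by (auto simp: le_less_trans)
  qed
  with \<open>\<Gamma>0 \<in> {\<Gamma>0. Mod \<mu> p \<Gamma>0 = 0}\<close> have "Mod \<mu>Y p \<Gamma>1 = 0" by simp
  moreover have "ball y \<delta> \<in> sets \<mu>Y" "ball y' \<delta> \<in> sets \<mu>Y"
    "emeasure \<mu>Y (ball y \<delta>) > 0" "emeasure \<mu>Y (ball y' \<delta>) > 0"
    using mY \<delta> unfolding mms_def by auto
  ultimately show False using thick unfolding thick_quasiconvex_def \<Gamma>1_def by fastforce
qed

lemma Lim_at_right_0_antimono:
  fixes h :: "real \<Rightarrow> 'b::{complete_linorder, linorder_topology}"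
  assumes anti: "antimono h"
  shows "Lim (at_right 0) h = (SUP \<delta>\<in>{0<..}. h \<delta>)"
proof (rule tendsto_Lim[OF trivial_limit_at_right_real], rule increasing_tendsto)
  show "\<forall>\<^sub>F \<delta> in at_right 0. h \<delta> \<le> (SUP \<delta>\<in>{0<..}. h \<delta>)"
    unfolding eventually_at_right_field by (intro exI[of _ 1]) (auto intro: SUP_upper)
next
  fix x assume "x < (SUP \<delta>\<in>{0<..}. h \<delta>)"
  then obtain \<delta>0 where "\<delta>0 > 0" "x < h \<delta>0" by (auto simp: less_SUP_iff)
  then show "\<forall>\<^sub>F \<delta> in at_right 0. x < h \<delta>"
    unfolding eventually_at_right_field using antimonoD[OF anti]
    by (intro exI[of _ \<delta>0]) (auto intro: less_le_trans)
qed

lemma ennreal_le_of_tendsto: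
  assumes "(g \<longlongrightarrow> l) F" "F \<noteq> bot" "\<forall>\<^sub>F t in F. x \<le> ennreal (g t)"
  shows "x \<le> ennreal l"
  using tendsto_le[OF assms(2) tendsto_ennrealI[OF assms(1)] tendsto_const assms(3)] .

lemma dp'_le_of_thick_quasiconvex:
  fixes \<mu> :: "'a::metric_space measure" and \<mu>Y :: "'b::metric_space measure" and f :: "'b \<Rightarrow> 'a"
  assumes mY: "mms \<mu>Y" and mX: "mms \<mu>" and vp: "volume_preserving \<mu>Y \<mu> f"
    and flip: "1-lipschitz_on UNIV f" and thick: "thick_quasiconvex \<mu>Y p K" and K: "K \<ge> 0"
  shows "dp' \<mu> p (f y) (f y') \<le> ennreal (K * dist y y')"
proof -
  define h where "h \<delta> = ess_length \<mu> p (curves_between (cball (f y) \<delta>) (cball (f y') \<delta>))" for \<delta>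
  have anti: "antimono h"
  proof (rule antimonoI)
    fix \<delta>1 \<delta>2 :: real assume "\<delta>1 \<le> \<delta>2"
    then have "curves_between (cball (f y) \<delta>1) (cball (f y') \<delta>1) \<subseteq> curves_between (cball (f y) \<delta>2) (cball (f y') \<delta>2)"
      unfolding curves_between_def by auto
    then show "h \<delta>2 \<le> h \<delta>1" unfolding h_def ess_length_def by (auto intro!: SUP_mono INF_superset_mono)
  qed
  have bound: "h \<delta> \<le> ennreal (K * (dist y y' + 2 * \<delta>))" if "\<delta> > 0" for \<delta>
    unfolding h_def by (rule ess_length_curves_between_le[OF mY mX vp flip thick K that])
  have "h \<delta>0 \<le> ennreal (K * dist y y')" if "\<delta>0 > 0" for \<delta>0
  proof (rule ennreal_le_of_tendsto[where F="at_right 0"])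
    show "((\<lambda>\<delta>. K * (dist y y' + 2 * \<delta>)) \<longlongrightarrow> K * dist y y') (at_right 0)"
      by (auto intro!: tendsto_eq_intros)
    show "\<forall>\<^sub>F \<delta> in at_right 0. h \<delta>0 \<le> ennreal (K * (dist y y' + 2 * \<delta>))"
      unfolding eventually_at_right_field
    proof (intro exI[of _ \<delta>0] conjI allI impI)
      fix \<delta> assume "0 < \<delta>" "\<delta> < \<delta>0"
      then show "h \<delta>0 \<le> ennreal (K * (dist y y' + 2 * \<delta>))"
        using antimonoD[OF anti, of \<delta> \<delta>0] bound[of \<delta>] by simp
    qed (rule that)
  qed simp
  then show ?thesis
    unfolding dp'_def h_def[symmetric] Lim_at_right_0_antimono[OF anti] by (auto intro: SUP_least)
qed

lemma dp_le_dp': "dp M p x y \<le> dp' M p x y"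
proof -
  let ?xs = "\<lambda>i::nat. if i = 0 then x else y"
  have "(1, ?xs) \<in> {(n, xs). n \<ge> 1 \<and> xs 0 = x \<and> xs n = y}" by simp
  moreover have "(\<Sum>i\<in>{1..1::nat}. dp' M p (?xs (i - 1)) (?xs i)) = dp' M p x y" by simp
  ultimately show ?thesis unfolding dp_def by (intro INF_lower2[of "(1, ?xs)"]) auto
qed

lemma dp_le_of_thick_quasiconvex:
  fixes \<mu> :: "'a::metric_space measure" and \<mu>Y :: "'b::metric_space measure" and f :: "'b \<Rightarrow> 'a"
  assumes "mms \<mu>Y" "mms \<mu>" "volume_preserving \<mu>Y \<mu> f"
    and "1-lipschitz_on UNIV f" "thick_quasiconvex \<mu>Y p K" "K \<ge> 0"
  shows "dp \<mu> p (f y) (f y') \<le> ennreal (K * dist y y')"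
  using order_trans[OF dp_le_dp' dp'_le_of_thick_quasiconvex[OF assms]] .

lemma open_of_dist_open:
  fixes D :: "'a::metric_space \<Rightarrow> 'a \<Rightarrow> ennreal"
  assumes D: "\<And>x y. D x y \<le> ennreal (C * dist x y)" and C: "C > 0" and U: "dist_open D U"
  shows "open U"
  unfolding open_dist
proof (intro ballI)
  fix x assume "x \<in> U"
  then obtain r where r: "r > 0" "{y. D x y < ennreal r} \<subseteq> U"
    using U unfolding dist_open_def by blast
  show "\<exists>e>0. \<forall>y. dist y x < e \<longrightarrow> y \<in> U"
  proof (intro exI[of _ "r / C"] conjI allI impI)
    fix y assume "dist y x < r / C"
    then have "ennreal (C * dist x y) < ennreal r"
      using r C by (intro ennreal_lessI) (auto simp: dist_commute field_simps)
    then show "y \<in> U" using D[of x y] r by (auto dest: le_less_trans)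
  qed (use r C in simp)
qed

lemma dist_borel_sets_subset_sets:
  fixes D :: "'a::metric_space \<Rightarrow> 'a \<Rightarrow> ennreal"
  assumes "mms \<mu>" "\<And>x y. D x y \<le> ennreal (C * dist x y)" "C > 0"
  shows "dist_borel_sets D \<subseteq> sets \<mu>"
proof -
  have "{U. dist_open D U} \<subseteq> sets \<mu>"
    using open_of_dist_open[OF assms(2,3)] assms(1) unfolding mms_def by auto
  then have "sigma_sets (space \<mu>) {U. dist_open D U} \<subseteq> sets \<mu>" by (rule sets.sigma_sets_subset)
  then show ?thesis using assms(1) unfolding dist_borel_sets_def mms_def by simp
qed

theorem proposition5p9:
  fixes \<mu> :: "'a::metric_space measure" and \<mu>Y :: "'b::metric_space measure"
    and p :: ennreal and C :: real and f :: "'b \<Rightarrow> 'a"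
  assumes "1 \<le> p"
    and "mms \<mu>" and "C \<ge> 1" and "thick_quasiconvex \<mu> p C"
    and "mms \<mu>Y" and "thick_geodesic \<mu>Y p"
    and "volume_preserving \<mu>Y \<mu> f" and "1-lipschitz_on UNIV f"
  shows "dist_borel_sets (dp \<mu> p) \<subseteq> sets \<mu>
       \<and> (\<forall>A \<in> dist_borel_sets (dp \<mu> p). f -` A \<in> sets \<mu>Y \<and> emeasure \<mu>Y (f -` A) = emeasure \<mu> A)
       \<and> (\<forall>y y'. dp \<mu> p (f y) (f y') \<le> ennreal (dist y y'))"
proof -
  note mX = assms(2) and mY = assms(5) and vp = assms(7) and flip = assms(8)
  have dp_le_C: "dp \<mu> p x x' \<le> ennreal (C * dist x x')" for x x'
    using dp_le_of_thick_quasiconvex[OF mX mX _ _ assms(4), of "\<lambda>x. x"] assms(3)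
    by (simp add: volume_preserving_def lipschitz_on_def)
  have measurable: "dist_borel_sets (dp \<mu> p) \<subseteq> sets \<mu>"
    using dist_borel_sets_subset_sets[OF mX dp_le_C] assms(3) by simp
  have "dp \<mu> p (f y) (f y') \<le> ennreal (dist y y')" for y y'
  proof (rule ennreal_le_of_tendsto[where F="at_right 1" and g="\<lambda>K. K * dist y y'"])
    show "\<forall>\<^sub>F K in at_right 1. dp \<mu> p (f y) (f y') \<le> ennreal (K * dist y y')"
      using assms(6) unfolding thick_geodesic_def eventually_at_right_field
      by (intro exI[of _ 2]) (auto intro!: dp_le_of_thick_quasiconvex[OF mY mX vp flip])
  qed (auto intro!: tendsto_eq_intros)
  with measurable vp show ?thesis unfolding volume_preserving_def by blast
qed

end
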